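(* Let $\sigma>0$, $\eta>0$, $\hat\alpha>0$, $h>0$, $r\ge0$, $a\in\mathbb{R}$, and for $\beta\ge0$ let $v_\beta$ denote the unique $C^1[0,\infty)$ solution of $\frac{\sigma^2}2v'(y)=\beta+\frac{\hat\alpha}4v(y)^2+\eta y(v(y)-\frac h\eta)-av(y)$, $y\ge0$, $v(0)=-r$. Let $\underline\beta_2=-ar-\frac{\hat\alpha r^2}4$, and let $i=1$ if $a>-\frac{\hat\alpha}4r$ and $i=2$ if $a\le-\frac{\hat\alpha}4r$. With $\beta_i^*=\inf\mathcal I_i$, the function $v_{\beta_i^*}$ is nondecreasing on $[0,\infty)$ and $\lim_{x\to\infty}v_{\beta_i^*}(x)=h/\eta$.
   Context: $\mathcal I_1=\{\beta\ge0: v_\beta$ is nondecreasing on $(0,\infty)\}$ and $\mathcal I_2=\{\beta>\underline\beta_2: v_\beta$ is nondecreasing on $(0,\infty)\}$. *)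

theory Defs
  imports "HOL-Analysis.Analysis"
begin

definition is_sol ::
  "real \<Rightarrow> real \<Rightarrow> real \<Rightarrow> real \<Rightarrow> real \<Rightarrow> real \<Rightarrow> real \<Rightarrow> (real \<Rightarrow> real) \<Rightarrow> bool" where
  "is_sol \<sigma> \<eta> \<alpha> h r a \<beta> w \<longleftrightarrow>
     (\<exists>w'. continuous_on {0..} w' \<and>
        (\<forall>y\<ge>0. (w has_real_derivative w' y) (at y within {0..}) \<and>
           \<sigma>\<^sup>2 / 2 * w' y = \<beta> + \<alpha> / 4 * (w y)\<^sup>2 + \<eta> * y * (w y - h / \<eta>) - a * w y)) \<and>
     w 0 = - r"

text \<open>Since the ODE has a locally Lipschitz right-hand side, a C^1[0,oo) solution is unique
  when it exists; "v_beta is nondecreasing on (0,oo)" is rendered as "the (unique) solution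
  exists and is nondecreasing on (0,oo)".\<close>
definition I1 :: "real \<Rightarrow> real \<Rightarrow> real \<Rightarrow> real \<Rightarrow> real \<Rightarrow> real \<Rightarrow> real set" where
  "I1 \<sigma> \<eta> \<alpha> h r a =
     {\<beta>. \<beta> \<ge> 0 \<and> (\<exists>w. is_sol \<sigma> \<eta> \<alpha> h r a \<beta> w \<and> mono_on {0<..} w)}"

definition beta2_low :: "real \<Rightarrow> real \<Rightarrow> real \<Rightarrow> real" where
  "beta2_low \<alpha> r a = - a * r - \<alpha> * r\<^sup>2 / 4"

definition I2 :: "real \<Rightarrow> real \<Rightarrow> real \<Rightarrow> real \<Rightarrow> real \<Rightarrow> real \<Rightarrow> real set" where
  "I2 \<sigma> \<eta> \<alpha> h r a =
     {\<beta>. \<beta> > beta2_low \<alpha> r a \<and> (\<exists>w. is_sol \<sigma> \<eta> \<alpha> h r a \<beta> w \<and> mono_on {0<..} w)}"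

end

theory Submission
  imports Defs
begin

(*
  With kappa = sigma^2/2, the Riccati substitution v = -(4 kappa / alpha) (shift + w'/w) turns the
  equation into the linear equation w'' = (P0 + P1 y) w' + Q(beta) w.  Its solution with w(0) = 1
  and the initial slope matching v(0) = -r is an entire power series in y that depends
  continuously on beta, so v_beta exists as long as w_beta stays positive.

  Shooting in beta: beta overshoots if v_beta gets above h/eta while still increasing, and
  undershoots if it turns downwards while below h/eta.  Each property persists once it occurs,
  so the two sets are disjoint; they are open by continuity in beta and nonempty (large beta,
  resp. beta below beta2_low).  As the real line is connected, some beta* lies in neither set;
  then w stays positive, v' >= 0 and v <= h/eta everywhere, so v_beta* is a global
  nondecreasing solution.

  Every solution that is nondecreasing on (0, oo) tends to h/eta: above h/eta it would blow up
  in finite time, and below a level b < h/eta the drift eta y (v - h/eta) would eventually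
  force it to decrease.  For beta1 < beta2 the difference of two solutions with the same
  initial value is positive and eventually grows linearly, so two such solutions with the
  same limit have the same beta.  Hence the set I of the statement is {beta*}.
*)

section \<open>Sign changes and growth of real functions\<close>

lemma first_zero_crossing:
  fixes g :: "real \<Rightarrow> real"
  assumes "a \<le> b" "continuous_on {a..b} g" "g a > 0" "g b \<le> 0"
  obtains z where "a < z" "z \<le> b" "g z = 0" "\<And>t. a \<le> t \<Longrightarrow> t < z \<Longrightarrow> g t > 0"
proof -
  define S where "S = {a..b} \<inter> g -` {..0}"
  have "closed S"
    unfolding S_def by (rule continuous_closed_preimage[OF assms(2)]) auto
  moreover have "b \<in> S"
    using assms(1,4) by (simp add: S_def)
  moreover have "bdd_below S"
    by (rule bdd_belowI[of _ a]) (simp add: S_def)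
  ultimately have z: "Inf S \<in> S" "\<And>t. t \<in> S \<Longrightarrow> Inf S \<le> t"
    by (auto intro: closed_contains_Inf cInf_lower)
  have pos: "g t > 0" if "a \<le> t" "t < Inf S" for t
    using z that by (force simp: S_def)
  have "Inf S \<noteq> a"
    using z(1) assms(3) by (auto simp: S_def)
  then have "a < Inf S"
    using z(1) by (auto simp: S_def)
  moreover obtain x where x: "a \<le> x" "x \<le> Inf S" "g x = 0"
  proof -
    have "continuous_on {a..Inf S} g"
      using z(1) by (auto simp: S_def intro: continuous_on_subset[OF assms(2)])
    then show ?thesis
      using IVT2'[of g "Inf S" 0 a] z(1) assms(3) \<open>a < Inf S\<close> that by (auto simp: S_def)
  qed
  ultimately have "x = Inf S"
    using pos[of x] by force
  with x have "g (Inf S) = 0" by simp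
  moreover have "Inf S \<le> b"
    using z(1) by (simp add: S_def)
  ultimately show thesis
    using that pos \<open>a < Inf S\<close> by blast
qed

lemma last_zero_crossing:
  fixes g :: "real \<Rightarrow> real"
  assumes "a \<le> b" "continuous_on {a..b} g" "g a \<le> 0" "g b > 0"
  obtains s where "a \<le> s" "s < b" "g s = 0" "\<And>t. s < t \<Longrightarrow> t \<le> b \<Longrightarrow> g t > 0"
proof -
  have "continuous_on {a..b} (\<lambda>t. g (a + b - t))"
    by (rule continuous_on_compose2[OF assms(2)]) (auto intro!: continuous_intros)
  then obtain z where "a < z" "z \<le> b" "g (a + b - z) = 0"
    "\<And>t. a \<le> t \<Longrightarrow> t < z \<Longrightarrow> g (a + b - t) > 0"
    using first_zero_crossing[of a b "\<lambda>t. g (a + b - t)"] assms by auto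
  show thesis
  proof (rule that[of "a + b - z"])
    fix t assume "a + b - z < t" "t \<le> b"
    then show "g t > 0"
      using \<open>\<And>t. a \<le> t \<Longrightarrow> t < z \<Longrightarrow> g (a + b - t) > 0\<close>[of "a + b - t"] by simp
  qed (use \<open>a < z\<close> \<open>z \<le> b\<close> \<open>g (a + b - z) = 0\<close> in auto)
qed

lemma pos_if_rising_at_zeros:
  fixes g :: "real \<Rightarrow> real"
  assumes "a \<le> b" "continuous_on {a..b} g" "g a > 0"
    and rising: "\<And>z. a < z \<Longrightarrow> z \<le> b \<Longrightarrow> g z = 0 \<Longrightarrow> (\<And>t. a \<le> t \<Longrightarrow> t < z \<Longrightarrow> g t > 0) \<Longrightarrow>
      \<exists>d>0. (g has_real_derivative d) (at z within {a..b})"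
  shows "g b > 0"
proof (rule ccontr)
  assume "\<not> g b > 0"
  then have "g b \<le> 0" by simp
  then obtain z where z: "a < z" "z \<le> b" "g z = 0" "\<And>t. a \<le> t \<Longrightarrow> t < z \<Longrightarrow> g t > 0"
    using first_zero_crossing[OF assms(1-3)] by blast
  then obtain d where "d > 0" "(g has_real_derivative d) (at z within {a..b})"
    using rising[OF z(1-3)] by blast
  then obtain e where e: "e > 0" "\<And>x. x > 0 \<Longrightarrow> z - x \<in> {a..b} \<Longrightarrow> x < e \<Longrightarrow> g (z - x) < g z"
    using has_real_derivative_pos_inc_left by blast
  define x where "x = min (e / 2) ((z - a) / 2)"
  have "x \<le> e / 2" "x \<le> (z - a) / 2"
    unfolding x_def by (rule min.cobounded1, rule min.cobounded2)
  moreover have "x > 0"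
    using e(1) z(1) by (simp add: x_def)
  ultimately show False
    using e(1) e(2)[of x] z(2,3) z(4)[of "z - x"] by simp
qed

lemma DERIV_ge_imp_linear_lower_bound:
  fixes f f' :: "real \<Rightarrow> real"
  assumes "a \<le> b"
    and "\<And>t. a \<le> t \<Longrightarrow> t \<le> b \<Longrightarrow> (f has_real_derivative f' t) (at t)"
    and "\<And>t. a \<le> t \<Longrightarrow> t \<le> b \<Longrightarrow> f' t \<ge> k"
  shows "f a + k * (b - a) \<le> f b"
proof (cases "a = b")
  case False
  then obtain z where "a < z" "z < b" "f b - f a = (b - a) * f' z"
    using MVT2[of a b f f'] assms by force
  moreover have "(b - a) * k \<le> (b - a) * f' z"
    using assms(1,3) \<open>a < z\<close> \<open>z < b\<close> by (intro mult_left_mono) auto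
  ultimately show ?thesis
    by (simp add: algebra_simps)
qed simp

lemma DERIV_le_imp_linear_upper_bound:
  fixes f f' :: "real \<Rightarrow> real"
  assumes "a \<le> b"
    and "\<And>t. a \<le> t \<Longrightarrow> t \<le> b \<Longrightarrow> (f has_real_derivative f' t) (at t)"
    and "\<And>t. a \<le> t \<Longrightarrow> t \<le> b \<Longrightarrow> f' t \<le> k"
  shows "f b \<le> f a + k * (b - a)"
proof -
  have "- f a + (- k) * (b - a) \<le> - f b"
    using assms by (intro DERIV_ge_imp_linear_lower_bound[of a b _ "\<lambda>t. - f' t"] DERIV_minus) auto
  then show ?thesis
    by simp
qed

lemma not_tendsto_if_DERIV_ge_pos:
  fixes f f' :: "real \<Rightarrow> real"
  assumes "c > 0" "eventually (\<lambda>t. (f has_real_derivative f' t) (at t) \<and> f' t \<ge> c) at_top"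
  shows "\<not> (f \<longlongrightarrow> L) at_top"
proof
  assume "(f \<longlongrightarrow> L) at_top"
  then have "eventually (\<lambda>t. f t < L + 1) at_top"
    by (rule order_tendstoD) simp
  with assms(2) have
    "eventually (\<lambda>t. ((f has_real_derivative f' t) (at t) \<and> f' t \<ge> c) \<and> f t < L + 1) at_top"
    by (rule eventually_conj)
  then obtain Y where Y: "\<And>t. t \<ge> Y \<Longrightarrow> (f has_real_derivative f' t) (at t) \<and> f' t \<ge> c \<and> f t < L + 1"
    unfolding eventually_at_top_linorder by blast
  define t where "t = Y + (L + 1 - f Y) / c"
  have "f Y < L + 1"
    using Y by blast
  then have "t \<ge> Y"
    using assms(1) by (simp add: t_def)
  then have "f Y + c * (t - Y) \<le> f t"
    using Y by (intro DERIV_ge_imp_linear_lower_bound[where f' = f']) auto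
  moreover have "f Y + c * (t - Y) = L + 1"
    using assms(1) by (simp add: t_def)
  ultimately show False
    using Y[OF \<open>t \<ge> Y\<close>] by simp
qed

lemma superquadratic_growth_blows_up:
  fixes f f' :: "real \<Rightarrow> real"
  assumes k: "k > 0" and pos: "f Y > 0"
    and deriv: "\<And>t. t \<ge> Y \<Longrightarrow> (f has_real_derivative f' t) (at t)"
    and growth: "\<And>t. t \<ge> Y \<Longrightarrow> f' t \<ge> k * (f t)\<^sup>2"
  shows False
proof -
  have f'_nonneg: "f' t \<ge> 0" if "t \<ge> Y" for t
    using growth[OF that] k by (smt (verit) mult_nonneg_nonneg zero_le_power2)
  have f_pos: "f t > 0" if "t \<ge> Y" for t
  proof -
    have "f Y + 0 * (t - Y) \<le> f t"
      using that deriv f'_nonneg by (intro DERIV_ge_imp_linear_lower_bound[where f' = f']) auto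
    then show ?thesis
      using pos by simp
  qed
  txt \<open>\<open>- 1 / f\<close> grows at rate at least \<open>k\<close>, so it would become positive after time \<open>T\<close>.\<close>
  define T where "T = 2 / (k * f Y)"
  have "- 1 / f Y + k * ((Y + T) - Y) \<le> - 1 / f (Y + T)"
  proof (rule DERIV_ge_imp_linear_lower_bound[where f = "\<lambda>t. - 1 / f t"])
    show "Y \<le> Y + T"
      using k pos by (simp add: T_def)
    fix t
    assume "Y \<le> t"
    then show "((\<lambda>t. - 1 / f t) has_real_derivative f' t / (f t)\<^sup>2) (at t)"
      using deriv[of t] f_pos[of t] by (auto intro!: derivative_eq_intros simp: power2_eq_square)
    show "k \<le> f' t / (f t)\<^sup>2"
      using growth[OF \<open>Y \<le> t\<close>] f_pos[OF \<open>Y \<le> t\<close>] by (simp add: field_simps)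
  qed
  moreover have "- 1 / f Y + k * ((Y + T) - Y) > 0"
    using k pos by (simp add: T_def)
  moreover have "- 1 / f (Y + T) < 0"
    using f_pos[of "Y + T"] k pos by (simp add: T_def)
  ultimately show False by linarith
qed

lemma quadratic_lower_bound:
  fixes \<alpha> a u :: real
  assumes "\<alpha> > 0"
  shows "\<alpha> / 4 * u\<^sup>2 - a * u \<ge> \<alpha> / 8 * u\<^sup>2 - 2 * a\<^sup>2 / \<alpha>"
proof -
  have "\<alpha> / 8 * u\<^sup>2 - a * u + 2 * a\<^sup>2 / \<alpha> = (\<alpha> * u - 4 * a)\<^sup>2 / (8 * \<alpha>)"
    using assms by (simp add: field_simps power2_eq_square)
  also have "\<dots> \<ge> 0"
    using assms by simp
  finally show ?thesis
    by simp
qed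

lemma isCont_of_continuous_on_prod:
  fixes f :: "'a::t2_space \<Rightarrow> 'b::topological_space \<Rightarrow> 'c::topological_space"
  assumes "continuous_on UNIV (\<lambda>z. f (fst z) (snd z))"
  shows "isCont (\<lambda>x. f x y) x0"
  using continuous_on_compose2[OF assms, of UNIV "\<lambda>x. (x, y)"]
  by (simp add: continuous_on_eq_continuous_at continuous_intros)

section \<open>Power series solutions of a linear second-order equation\<close>

lemma recurrence_crude_bound:
  fixes g :: "nat \<Rightarrow> real"
  assumes E: "E \<ge> 1" and C: "C \<ge> 0" and g0: "g 0 \<le> C" and g1: "g 1 \<le> E * C"
    and rec: "\<And>n. g (n + 2) \<le> E / 2 * (g (n + 1) + g n)"
  shows "g n \<le> E ^ n * C"
proof -
  have "g n \<le> E ^ n * C \<and> g (n + 1) \<le> E ^ (n + 1) * C"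
  proof (induction n)
    case 0
    then show ?case using g0 g1 by simp
  next
    case (Suc n)
    have "E ^ n * C \<le> E ^ (n + 1) * C"
      using E C by (intro mult_right_mono power_increasing) auto
    then have "g (n + 2) \<le> E / 2 * (2 * (E ^ (n + 1) * C))"
      using Suc E rec[of n] by (smt (verit) mult_left_mono divide_nonneg_pos)
    then show ?case
      using Suc by (simp add: field_simps)
  qed
  then show ?thesis ..
qed

lemma recurrence_eventually_geometric:
  fixes g :: "nat \<Rightarrow> real"
  assumes K: "K \<ge> 0" and start: "\<And>n. n \<le> N + 1 \<Longrightarrow> g n \<le> K * (3/4) ^ n"
    and rec: "\<And>n. n \<ge> N \<Longrightarrow> g (n + 2) \<le> (g (n + 1) + g n) / 4"
  shows "g n \<le> K * (3/4) ^ n"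
proof (induction n rule: less_induct)
  case (less n)
  show ?case
  proof (cases "n \<le> N + 1")
    case False
    define m where "m = n - 2"
    have m: "n = m + 2" "m \<ge> N"
      using False by (auto simp: m_def)
    have "g n \<le> (K * (3/4) ^ (m + 1) + K * (3/4) ^ m) / 4"
      using rec[OF m(2)] less.IH[of m] less.IH[of "m + 1"] m(1) by simp
    also have "\<dots> = K * (3/4) ^ m * (7/16)"
      by (simp add: field_simps)
    also have "\<dots> \<le> K * (3/4) ^ m * (9/16)"
      using K by (intro mult_left_mono) auto
    finally show ?thesis
      using m(1) by (simp add: power_add)
  qed (rule start)
qed

lemma recurrence_uniform_geometric_bound:
  fixes L C :: real
  assumes L: "L \<ge> 0" and C: "C \<ge> 0"
  obtains K where "\<And>g n. (\<And>n. g n \<ge> 0) \<Longrightarrow> g 0 \<le> C \<Longrightarrow> g 1 \<le> C \<Longrightarrow>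
    (\<And>n. g (n + 2) \<le> L / (real n + 1) * (g (n + 1) + g n)) \<Longrightarrow> g n \<le> K * (3/4) ^ n"
proof
  define E where "E = max 1 (2 * L)"
  define N where "N = nat \<lceil>4 * L\<rceil>"
  have E: "E \<ge> 1" "2 * L \<le> E"
    by (auto simp: E_def)
  fix g :: "nat \<Rightarrow> real" and n
  assume g_nonneg: "\<And>n. g n \<ge> 0" and g0: "g 0 \<le> C" and g1: "g 1 \<le> C"
    and g_rec: "\<And>n. g (n + 2) \<le> L / (real n + 1) * (g (n + 1) + g n)"
  have rec_le: "g (n + 2) \<le> M * (g (n + 1) + g n)" if "L / (real n + 1) \<le> M" for M n
    using g_rec[of n] that g_nonneg[of n] g_nonneg[of "n + 1"]
    by (intro order_trans[OF g_rec mult_right_mono]) auto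
  have crude: "g n \<le> E ^ n * C" for n
  proof (rule recurrence_crude_bound[of E C g, OF E(1) C g0])
    show "g 1 \<le> E * C"
      using g1 E(1) C by (smt (verit) mult_le_cancel_right1)
    fix n
    have "L / (real n + 1) \<le> L / 1"
      using L by (intro divide_left_mono) auto
    also have "\<dots> \<le> E / 2"
      using E(2) by simp
    finally show "g (n + 2) \<le> E / 2 * (g (n + 1) + g n)"
      by (rule rec_le)
  qed
  show "g n \<le> E ^ (N + 1) * C * (4/3) ^ (N + 1) * (3/4) ^ n"
  proof (rule recurrence_eventually_geometric)
    show "E ^ (N + 1) * C * (4/3) ^ (N + 1) \<ge> 0"
      using E C by simp
    show "g n \<le> E ^ (N + 1) * C * (4/3) ^ (N + 1) * (3/4) ^ n" if "n \<le> N + 1" for n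
    proof -
      have "g n \<le> E ^ (N + 1) * C"
        using that E(1) C by (intro order_trans[OF crude] mult_right_mono power_increasing) auto
      also have "\<dots> = E ^ (N + 1) * C * (4/3) ^ (N + 1) * (3/4) ^ (N + 1)"
        by (simp add: power_mult_distrib[symmetric])
      also have "\<dots> \<le> E ^ (N + 1) * C * (4/3) ^ (N + 1) * (3/4) ^ n"
        using that E C by (intro mult_left_mono power_decreasing) auto
      finally show ?thesis .
    qed
    show "g (n + 2) \<le> (g (n + 1) + g n) / 4" if "N \<le> n" for n
    proof -
      have "4 * L \<le> real n + 1"
        using that unfolding N_def by linarith
      then have "L / (real n + 1) \<le> 1 / 4"
        by (simp add: divide_le_eq)
      then show ?thesis
        using rec_le by fastforce
    qed
  qed
qed

lemma recurrence_geometric_bound: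
  fixes c :: "'i \<Rightarrow> nat \<Rightarrow> real"
  assumes R: "R \<ge> 1" and D: "D \<ge> 0"
    and c0: "\<And>i. i \<in> I \<Longrightarrow> \<bar>c i 0\<bar> \<le> A" and c1: "\<And>i. i \<in> I \<Longrightarrow> \<bar>c i 1\<bar> \<le> A"
    and rec: "\<And>i n. i \<in> I \<Longrightarrow> \<bar>c i (n + 2)\<bar> \<le> D / (real n + 1) * (\<bar>c i (n + 1)\<bar> + \<bar>c i n\<bar>)"
  shows "\<exists>K. \<forall>i\<in>I. \<forall>n. \<bar>c i n\<bar> * R ^ n \<le> K * (3/4) ^ n"
proof -
  obtain K where K: "\<And>g n. (\<And>n. g n \<ge> 0) \<Longrightarrow> g 0 \<le> max A 0 * R \<Longrightarrow> g 1 \<le> max A 0 * R \<Longrightarrow>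
      (\<And>n. g (n + 2) \<le> D * R\<^sup>2 / (real n + 1) * (g (n + 1) + g n)) \<Longrightarrow> g n \<le> K * (3/4) ^ n"
    using recurrence_uniform_geometric_bound[of "D * R\<^sup>2" "max A 0 * R"] D R by auto
  have "\<bar>c i n\<bar> * R ^ n \<le> K * (3/4) ^ n" if i: "i \<in> I" for i n
  proof (rule K)
    show "\<bar>c i n\<bar> * R ^ n \<ge> 0" for n
      using R by simp
    have "max A 0 \<le> max A 0 * R"
      using R by (simp add: mult_le_cancel_left1)
    then show "\<bar>c i 0\<bar> * R ^ 0 \<le> max A 0 * R"
      using c0[OF i] by simp
    show "\<bar>c i 1\<bar> * R ^ 1 \<le> max A 0 * R"
      using c1[OF i] R by (simp add: mult_right_mono)
    fix n
    have "\<bar>c i (n + 2)\<bar> * R ^ (n + 2) \<le> D / (real n + 1) * (\<bar>c i (n + 1)\<bar> + \<bar>c i n\<bar>) * R ^ (n + 2)"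
      using rec[OF i] R by (intro mult_right_mono) auto
    also have "\<dots> = D / (real n + 1) * (\<bar>c i (n + 1)\<bar> * R ^ (n + 1) * R + \<bar>c i n\<bar> * R ^ n * R\<^sup>2)"
      by (simp add: power_add algebra_simps power2_eq_square)
    also have "\<dots> \<le> D / (real n + 1) * (\<bar>c i (n + 1)\<bar> * R ^ (n + 1) * R\<^sup>2 + \<bar>c i n\<bar> * R ^ n * R\<^sup>2)"
      using R D
      by (intro mult_left_mono add_right_mono mult_left_mono) (auto simp: power2_eq_square)
    finally show "\<bar>c i (n + 2)\<bar> * R ^ (n + 2)
        \<le> D * R\<^sup>2 / (real n + 1) * (\<bar>c i (n + 1)\<bar> * R ^ (n + 1) + \<bar>c i n\<bar> * R ^ n)"
      by (simp add: field_simps)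
  qed
  then show ?thesis by blast
qed

definition pseries :: "(nat \<Rightarrow> real) \<Rightarrow> real \<Rightarrow> real" where
  "pseries c y = (\<Sum>n. c n * y ^ n)"

lemma pseries_has_real_derivative:
  assumes "\<And>y. summable (\<lambda>n. c n * y ^ n)"
  shows "(pseries c has_real_derivative pseries (diffs c) y) (at y)"
  unfolding pseries_def[abs_def] using termdiffs_strong_converges_everywhere[OF assms] .

definition locally_uniformly_entire :: "(real \<Rightarrow> nat \<Rightarrow> real) \<Rightarrow> bool" where
  "locally_uniformly_entire c \<longleftrightarrow>
     (\<forall>B. \<forall>R\<ge>1. \<exists>M. summable M \<and> (\<forall>q n. \<bar>q\<bar> \<le> B \<longrightarrow> \<bar>c q n\<bar> * R ^ n \<le> M n))"

lemma locally_uniformly_entireD: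
  assumes "locally_uniformly_entire c" "R \<ge> 1"
  obtains M where "summable M" "\<And>q n. \<bar>q\<bar> \<le> B \<Longrightarrow> \<bar>c q n\<bar> * R ^ n \<le> M n"
  using assms unfolding locally_uniformly_entire_def by blast

lemma locally_uniformly_entire_summable:
  assumes "locally_uniformly_entire c"
  shows "summable (\<lambda>n. c q n * y ^ n)"
proof -
  obtain M where M: "summable M"
    "\<And>q' n. \<bar>q'\<bar> \<le> \<bar>q\<bar> \<Longrightarrow> \<bar>c q' n\<bar> * (max 1 \<bar>y\<bar>) ^ n \<le> M n"
    using locally_uniformly_entireD[OF assms max.cobounded1, where B = "\<bar>q\<bar>"] by blast
  show ?thesis
  proof (rule summable_comparison_test'[OF M(1)])
    fix n
    have "norm (c q n * y ^ n) \<le> \<bar>c q n\<bar> * (max 1 \<bar>y\<bar>) ^ n"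
      by (auto simp: abs_mult power_abs intro!: mult_left_mono power_mono)
    then show "norm (c q n * y ^ n) \<le> M n"
      using M(2)[OF order_refl, of n] by linarith
  qed
qed

lemma locally_uniformly_entire_diffs:
  assumes "locally_uniformly_entire c"
  shows "locally_uniformly_entire (\<lambda>q. diffs (c q))"
  unfolding locally_uniformly_entire_def
proof (intro allI impI)
  fix B R :: real
  assume R: "R \<ge> 1"
  then obtain M where M: "summable M" "\<And>q n. \<bar>q\<bar> \<le> B \<Longrightarrow> \<bar>c q n\<bar> * (2 * R) ^ n \<le> M n"
    using locally_uniformly_entireD[OF assms, of "2 * R"] by auto
  have "\<bar>diffs (c q) n\<bar> * R ^ n \<le> M (Suc n)" if "\<bar>q\<bar> \<le> B" for q n
  proof -
    have "real (Suc n) \<le> 2 ^ Suc n"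
      using less_exp[of "Suc n"] by (metis less_imp_le of_nat_le_iff of_nat_numeral of_nat_power)
    moreover have "R ^ n \<le> R ^ Suc n"
      using R by (intro power_increasing) auto
    ultimately have "real (Suc n) * R ^ n \<le> (2 * R) ^ Suc n"
      unfolding power_mult_distrib using R by (intro mult_mono) auto
    have "\<bar>diffs (c q) n\<bar> * R ^ n = \<bar>c q (Suc n)\<bar> * (real (Suc n) * R ^ n)"
      by (simp add: diffs_def abs_mult)
    also have "\<dots> \<le> \<bar>c q (Suc n)\<bar> * (2 * R) ^ Suc n"
      by (rule mult_left_mono) (use \<open>real (Suc n) * R ^ n \<le> (2 * R) ^ Suc n\<close> in auto)
    finally show ?thesis
      using M(2)[OF that, of "Suc n"] by linarith
  qed
  then show "\<exists>M. summable M \<and> (\<forall>q n. \<bar>q\<bar> \<le> B \<longrightarrow> \<bar>diffs (c q) n\<bar> * R ^ n \<le> M n)"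
    using M(1) summable_Suc_iff by blast
qed

lemma locally_uniformly_entire_continuous:
  assumes entire: "locally_uniformly_entire c"
    and coeff_cont: "\<And>n. continuous_on UNIV (\<lambda>q. c q n)"
  shows "continuous_on UNIV (\<lambda>z. pseries (c (fst z)) (snd z))"
proof (rule continuous_at_imp_continuous_on, intro ballI)
  fix z0 :: "real \<times> real"
  have "1 \<le> \<bar>snd z0\<bar> + 1" by simp
  then obtain M where M: "summable M"
    "\<And>q n. \<bar>q\<bar> \<le> \<bar>fst z0\<bar> + 1 \<Longrightarrow> \<bar>c q n\<bar> * (\<bar>snd z0\<bar> + 1) ^ n \<le> M n"
    using locally_uniformly_entireD[OF entire, where B = "\<bar>fst z0\<bar> + 1"] by blast
  have bound: "\<bar>c (fst z) n * snd z ^ n\<bar> \<le> M n" if "z \<in> cball z0 1" for z n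
  proof -
    have "dist (fst z) (fst z0) \<le> 1" "dist (snd z) (snd z0) \<le> 1"
      using that dist_fst_le[of z z0] dist_snd_le[of z z0] by (auto simp: dist_commute)
    then have "\<bar>fst z\<bar> \<le> \<bar>fst z0\<bar> + 1" "\<bar>snd z\<bar> \<le> \<bar>snd z0\<bar> + 1"
      by (auto simp: dist_real_def)
    then have "\<bar>c (fst z) n * snd z ^ n\<bar> \<le> \<bar>c (fst z) n\<bar> * (\<bar>snd z0\<bar> + 1) ^ n"
      by (auto simp: abs_mult power_abs intro!: mult_left_mono power_mono)
    then show ?thesis
      using M(2)[of "fst z" n] \<open>\<bar>fst z\<bar> \<le> \<bar>fst z0\<bar> + 1\<close> by linarith
  qed
  have limit: "uniform_limit (cball z0 1) (\<lambda>N z. \<Sum>n<N. c (fst z) n * snd z ^ n)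
      (\<lambda>z. \<Sum>n. c (fst z) n * snd z ^ n) sequentially"
    by (rule Weierstrass_m_test) (use M(1) bound in auto)
  have partial_sums: "continuous_on (cball z0 1) (\<lambda>z. \<Sum>n<N. c (fst z) n * snd z ^ n)" for N
  proof (intro continuous_on_sum continuous_on_mult continuous_on_power continuous_on_snd
      continuous_on_id)
    show "continuous_on (cball z0 1) (\<lambda>z. c (fst z) n)" for n
      by (rule continuous_on_compose2[OF coeff_cont[of n] continuous_on_fst[OF continuous_on_id]])
        auto
  qed
  have "continuous_on (cball z0 1) (\<lambda>z. \<Sum>n. c (fst z) n * snd z ^ n)"
    using uniform_limit_theorem[OF always_eventually limit] partial_sums by simp
  then show "isCont (\<lambda>z. pseries (c (fst z)) (snd z)) z0"
    unfolding pseries_def by (rule continuous_on_interior) simp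
qed

text \<open>Taylor coefficients at 0 of the solution of \<open>w'' = (p0 + p1 y) w' + q w\<close> with
  \<open>w 0 = 1\<close> and \<open>w' 0 = c1\<close>.\<close>

fun lin_ode_coeff :: "real \<Rightarrow> real \<Rightarrow> real \<Rightarrow> real \<Rightarrow> nat \<Rightarrow> real" where
  "lin_ode_coeff p0 p1 c1 q 0 = 1"
| "lin_ode_coeff p0 p1 c1 q (Suc 0) = c1"
| "lin_ode_coeff p0 p1 c1 q (Suc (Suc n)) =
     (p0 * (real n + 1) * lin_ode_coeff p0 p1 c1 q (Suc n)
       + (p1 * real n + q) * lin_ode_coeff p0 p1 c1 q n)
     / ((real n + 2) * (real n + 1))"

context
  fixes p0 p1 c1 :: real
begin

private abbreviation c :: "real \<Rightarrow> nat \<Rightarrow> real" where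
  "c \<equiv> lin_ode_coeff p0 p1 c1"

lemma lin_ode_coeff_continuous: "continuous_on UNIV (\<lambda>q. c q n)"
proof -
  have "continuous_on UNIV (\<lambda>q. c q n) \<and> continuous_on UNIV (\<lambda>q. c q (Suc n))"
    by (induction n) (auto simp del: of_nat_Suc intro!: continuous_intros)
  then show ?thesis ..
qed

lemma lin_ode_coeff_recurrence_bound:
  "\<bar>c q (n + 2)\<bar> \<le> (\<bar>p0\<bar> + \<bar>p1\<bar> + \<bar>q\<bar>) / (real n + 1) * (\<bar>c q (n + 1)\<bar> + \<bar>c q n\<bar>)"
proof -
  define D where "D = \<bar>p0\<bar> + \<bar>p1\<bar> + \<bar>q\<bar>"
  have "\<bar>p0 * (real n + 1) * c q (n + 1) + (p1 * real n + q) * c q n\<bar>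
      \<le> \<bar>p0\<bar> * (real n + 1) * \<bar>c q (n + 1)\<bar> + (\<bar>p1\<bar> * real n + \<bar>q\<bar>) * \<bar>c q n\<bar>"
  proof -
    have "\<bar>p1 * real n + q\<bar> \<le> \<bar>p1\<bar> * real n + \<bar>q\<bar>"
      using abs_triangle_ineq[of "p1 * real n" q] by (simp add: abs_mult)
    then have "\<bar>(p1 * real n + q) * c q n\<bar> \<le> (\<bar>p1\<bar> * real n + \<bar>q\<bar>) * \<bar>c q n\<bar>"
      by (simp add: abs_mult mult_right_mono)
    then show ?thesis
      using abs_triangle_ineq[of "p0 * (real n + 1) * c q (n + 1)" "(p1 * real n + q) * c q n"]
      by (simp add: abs_mult)
  qed
  also have "\<dots> \<le> D * (real n + 2) * \<bar>c q (n + 1)\<bar> + D * (real n + 2) * \<bar>c q n\<bar>"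
  proof (intro add_mono mult_right_mono)
    show "\<bar>p0\<bar> * (real n + 1) \<le> D * (real n + 2)"
      unfolding D_def by (intro mult_mono) auto
    have "\<bar>q\<bar> \<le> \<bar>q\<bar> * (real n + 2)"
      by (simp add: mult_le_cancel_left1)
    moreover have "\<bar>p1\<bar> * real n \<le> \<bar>p1\<bar> * (real n + 2)"
      by (intro mult_left_mono) auto
    ultimately show "\<bar>p1\<bar> * real n + \<bar>q\<bar> \<le> D * (real n + 2)"
      unfolding D_def by (simp add: algebra_simps)
  qed auto
  finally have "\<bar>c q (n + 2)\<bar>
      \<le> D * (real n + 2) * (\<bar>c q (n + 1)\<bar> + \<bar>c q n\<bar>) / ((real n + 2) * (real n + 1))"
    by (simp add: numeral_2_eq_2 abs_divide algebra_simps divide_right_mono)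
  then show ?thesis
    by (simp add: D_def)
qed

lemma lin_ode_coeff_entire: "locally_uniformly_entire c"
  unfolding locally_uniformly_entire_def
proof (intro allI impI)
  fix B R :: real
  assume "R \<ge> 1"
  moreover have "\<bar>c q (n + 2)\<bar> \<le> (\<bar>p0\<bar> + \<bar>p1\<bar> + \<bar>B\<bar>) / (real n + 1) * (\<bar>c q (n + 1)\<bar> + \<bar>c q n\<bar>)"
    if "\<bar>q\<bar> \<le> B" for q n
  proof -
    have "(\<bar>p0\<bar> + \<bar>p1\<bar> + \<bar>q\<bar>) / (real n + 1) \<le> (\<bar>p0\<bar> + \<bar>p1\<bar> + \<bar>B\<bar>) / (real n + 1)"
      using that by (intro divide_right_mono) auto
    then show ?thesis
      by (rule order_trans[OF lin_ode_coeff_recurrence_bound mult_right_mono]) simp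
  qed
  ultimately obtain K where K: "\<forall>q\<in>{q. \<bar>q\<bar> \<le> B}. \<forall>n. \<bar>c q n\<bar> * R ^ n \<le> K * (3/4) ^ n"
    using recurrence_geometric_bound[of R "\<bar>p0\<bar> + \<bar>p1\<bar> + \<bar>B\<bar>" "{q. \<bar>q\<bar> \<le> B}" c "max 1 \<bar>c1\<bar>"]
    by auto
  then show "\<exists>M. summable M \<and> (\<forall>q n. \<bar>q\<bar> \<le> B \<longrightarrow> \<bar>c q n\<bar> * R ^ n \<le> M n)"
    by (intro exI[of _ "\<lambda>n. K * (3/4) ^ n"]) auto
qed

lemma lin_ode_coeff_pseries:
  "pseries (diffs (diffs (c q))) y = (p0 + p1 * y) * pseries (diffs (c q)) y + q * pseries (c q) y"
proof -
  have summable: "summable (\<lambda>n. a n * y ^ n)"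
    if "a \<in> {c q, diffs (c q)}" for a
    using that locally_uniformly_entire_summable[OF lin_ode_coeff_entire]
      locally_uniformly_entire_summable[OF locally_uniformly_entire_diffs[OF lin_ode_coeff_entire]]
    by auto
  have coeff: "diffs (diffs (c q)) n = p0 * diffs (c q) n + p1 * (real n * c q n) + q * c q n" for n
  proof -
    have "diffs (diffs (c q)) n = (real n + 2) * (real n + 1) * c q (Suc (Suc n))"
      by (simp add: diffs_def algebra_simps del: lin_ode_coeff.simps)
    also have "\<dots> = p0 * (real n + 1) * c q (Suc n) + (p1 * real n + q) * c q n"
      by (simp del: of_nat_Suc)
    finally show ?thesis
      by (simp add: diffs_def algebra_simps)
  qed
  have "(\<lambda>n. real n * c q n * y ^ n) sums (y * pseries (diffs (c q)) y)"
  proof -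
    have "(\<lambda>n. y * (diffs (c q) n * y ^ n)) sums (y * pseries (diffs (c q)) y)"
      unfolding pseries_def by (intro sums_mult summable_sums summable) simp
    then have "(\<lambda>n. real (Suc n) * c q (Suc n) * y ^ Suc n) sums (y * pseries (diffs (c q)) y)"
      by (simp add: diffs_def algebra_simps)
    then show ?thesis
      using sums_Suc_iff[of "\<lambda>n. real n * c q n * y ^ n"] by simp
  qed
  then have "(\<lambda>n. p0 * (diffs (c q) n * y ^ n) + p1 * (real n * c q n * y ^ n)
        + q * (c q n * y ^ n))
      sums (p0 * pseries (diffs (c q)) y + p1 * (y * pseries (diffs (c q)) y)
        + q * pseries (c q) y)"
    unfolding pseries_def by (intro sums_add sums_mult summable_sums summable) auto
  then have "(\<lambda>n. diffs (diffs (c q)) n * y ^ n)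
      sums ((p0 + p1 * y) * pseries (diffs (c q)) y + q * pseries (c q) y)"
    by (simp add: coeff algebra_simps)
  then show ?thesis
    unfolding pseries_def by (rule sums_unique[symmetric])
qed

end

section \<open>Monotone solutions of the Riccati equation\<close>

locale riccati =
  fixes \<sigma> \<eta> \<alpha> h r a :: real
  assumes \<sigma>_pos: "\<sigma> > 0" and \<eta>_pos: "\<eta> > 0" and \<alpha>_pos: "\<alpha> > 0" and h_pos: "h > 0"
    and r_nonneg: "r \<ge> 0"
begin

definition \<kappa> :: real where
  "\<kappa> = \<sigma>\<^sup>2 / 2"

definition F :: "real \<Rightarrow> real \<Rightarrow> real \<Rightarrow> real" where
  "F \<beta> y u = \<beta> + \<alpha> / 4 * u\<^sup>2 + \<eta> * y * (u - h / \<eta>) - a * u"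

definition is_riccati_sol :: "real \<Rightarrow> (real \<Rightarrow> real) \<Rightarrow> (real \<Rightarrow> real) \<Rightarrow> bool" where
  "is_riccati_sol \<beta> f f' \<longleftrightarrow>
     (\<forall>y\<ge>0. (f has_real_derivative f' y) (at y within {0..}) \<and> \<kappa> * f' y = F \<beta> y (f y))"

lemma \<kappa>_pos: "\<kappa> > 0"
  using \<sigma>_pos by (simp add: \<kappa>_def)

lemma is_sol_iff_riccati:
  "is_sol \<sigma> \<eta> \<alpha> h r a \<beta> f \<longleftrightarrow> (\<exists>f'. continuous_on {0..} f' \<and> is_riccati_sol \<beta> f f') \<and> f 0 = - r"
  by (simp add: is_sol_def is_riccati_sol_def \<kappa>_def F_def)

lemma is_riccati_sol_at:
  assumes "is_riccati_sol \<beta> f f'" "y > 0"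
  shows "(f has_real_derivative f' y) (at y)"
proof -
  have "(f has_real_derivative f' y) (at y within {0..})"
    using assms unfolding is_riccati_sol_def by simp
  moreover have "at y within {0..} = at y"
    using assms(2) interior_Ici[of "- 1" 0] by (intro at_within_interior) simp
  ultimately show ?thesis
    by simp
qed

lemma is_riccati_sol_eq: "is_riccati_sol \<beta> f f' \<Longrightarrow> y \<ge> 0 \<Longrightarrow> \<kappa> * f' y = F \<beta> y (f y)"
  unfolding is_riccati_sol_def by blast

lemma F_ge_if_above:
  assumes "u \<ge> h / \<eta> + \<delta>" "t \<ge> 0"
  shows "F \<beta> t u \<ge> \<alpha> / 8 * u\<^sup>2 + \<beta> - 2 * a\<^sup>2 / \<alpha> + \<eta> * \<delta> * t"
proof -
  have "\<eta> * t * (u - h / \<eta>) \<ge> \<eta> * t * \<delta>"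
    using assms \<eta>_pos by (intro mult_left_mono) auto
  then show ?thesis
    using quadratic_lower_bound[OF \<alpha>_pos, of u a] by (simp add: F_def algebra_simps)
qed

lemma F_le_if_below:
  assumes "\<bar>u\<bar> \<le> M" "u \<le> h / \<eta> - \<delta>" "t \<ge> 0"
  shows "F \<beta> t u \<le> \<bar>\<beta>\<bar> + \<alpha> / 4 * M\<^sup>2 + \<bar>a\<bar> * M - \<eta> * \<delta> * t"
proof -
  have "\<bar>u\<bar>\<^sup>2 \<le> M\<^sup>2"
    using assms(1) by (rule power_mono[OF _ abs_ge_zero])
  then have "\<alpha> / 4 * u\<^sup>2 \<le> \<alpha> / 4 * M\<^sup>2"
    using \<alpha>_pos by simp
  moreover have "- a * u \<le> \<bar>a\<bar> * M"
    using abs_ge_self[of "- a * u"] mult_left_mono[OF assms(1) abs_ge_zero[of a]]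
    by (simp add: abs_mult)
  moreover have "\<eta> * t * (u - h / \<eta>) \<le> \<eta> * t * (- \<delta>)"
    using assms(2,3) \<eta>_pos by (intro mult_left_mono) auto
  ultimately show ?thesis
    using abs_ge_self[of \<beta>] by (simp add: F_def algebra_simps)
qed

lemma F_ge_on_unit_interval:
  assumes "0 \<le> y" "y \<le> 1"
  shows "F \<beta> y u \<ge> \<beta> - 2 * (\<eta> + \<bar>a\<bar>)\<^sup>2 / \<alpha> - h"
proof -
  define b where "b = a - \<eta> * y"
  have "0 \<le> \<eta> * y" "\<eta> * y \<le> \<eta>"
    using assms \<eta>_pos by (auto simp: mult_left_le)
  then have "\<bar>b\<bar> \<le> \<eta> + \<bar>a\<bar>"
    unfolding b_def by arith
  then have "\<bar>b\<bar>\<^sup>2 \<le> (\<eta> + \<bar>a\<bar>)\<^sup>2"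
    by (intro power_mono) auto
  then have "2 * b\<^sup>2 / \<alpha> \<le> 2 * (\<eta> + \<bar>a\<bar>)\<^sup>2 / \<alpha>"
    using \<alpha>_pos by (intro divide_right_mono) auto
  moreover have "\<alpha> / 8 * u\<^sup>2 \<ge> 0" "h * y \<le> h"
    using assms \<alpha>_pos h_pos by (simp_all add: mult_left_le)
  moreover have "F \<beta> y u = \<beta> + (\<alpha> / 4 * u\<^sup>2 - b * u) - h * y"
    using \<eta>_pos by (simp add: F_def b_def field_simps)
  ultimately show ?thesis
    using quadratic_lower_bound[OF \<alpha>_pos, of u b] by linarith
qed

lemma mono_riccati_sol_le:
  assumes sol: "is_riccati_sol \<beta> f f'" and mono: "mono_on {0<..} f" and y1: "y1 > 0"
  shows "f y1 \<le> h / \<eta>"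
proof (rule ccontr)
  assume "\<not> f y1 \<le> h / \<eta>"
  define \<delta> where "\<delta> = f y1 - h / \<eta>"
  define Y where "Y = max y1 ((2 * a\<^sup>2 / \<alpha> + \<bar>\<beta>\<bar>) / (\<eta> * \<delta>))"
  have \<delta>: "\<delta> > 0" "\<eta> * \<delta> > 0"
    using \<open>\<not> f y1 \<le> h / \<eta>\<close> \<eta>_pos by (simp_all add: \<delta>_def)
  have "(2 * a\<^sup>2 / \<alpha> + \<bar>\<beta>\<bar>) / (\<eta> * \<delta>) \<le> Y"
    by (simp add: Y_def)
  then have Y: "Y \<ge> y1" "\<eta> * \<delta> * Y \<ge> 2 * a\<^sup>2 / \<alpha> + \<bar>\<beta>\<bar>"
    using \<delta>(2) by (simp add: Y_def, metis mult.commute pos_divide_le_eq)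
  have f_above: "f t \<ge> h / \<eta> + \<delta>" if "t \<ge> Y" for t
    using mono_onD[OF mono, of y1 t] y1 Y(1) that by (simp add: \<delta>_def)
  have growth: "f' t \<ge> \<alpha> / (8 * \<kappa>) * (f t)\<^sup>2" if "t \<ge> Y" for t
  proof -
    have "\<eta> * \<delta> * t \<ge> \<eta> * \<delta> * Y"
      using \<delta>(2) that by (intro mult_left_mono) auto
    moreover have "\<kappa> * f' t = F \<beta> t (f t)"
      using is_riccati_sol_eq[OF sol, of t] that Y(1) y1 by simp
    ultimately have "\<kappa> * f' t \<ge> \<alpha> / 8 * (f t)\<^sup>2"
      using F_ge_if_above[OF f_above[OF that], of t \<beta>] that Y y1 abs_ge_minus_self[of \<beta>]
      by linarith
    then show ?thesis
      using \<kappa>_pos by (simp add: field_simps)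
  qed
  have "h / \<eta> > 0"
    using h_pos \<eta>_pos by simp
  then have "f Y > 0"
    using f_above[of Y] \<delta>(1) by simp
  show False
  proof (rule superquadratic_growth_blows_up[of "\<alpha> / (8 * \<kappa>)" f Y f', OF _ \<open>f Y > 0\<close> _ growth])
    show "\<alpha> / (8 * \<kappa>) > 0"
      using \<alpha>_pos \<kappa>_pos by simp
    show "(f has_real_derivative f' t) (at t)" if "t \<ge> Y" for t
      using is_riccati_sol_at[OF sol] that Y(1) y1 by simp
  qed
qed

lemma mono_riccati_sol_exceeds:
  assumes sol: "is_riccati_sol \<beta> f f'" and mono: "mono_on {0<..} f" and b: "b < h / \<eta>"
  shows "\<exists>y>0. f y > b"
proof (rule ccontr)
  assume "\<not> (\<exists>y>0. f y > b)"
  then have f_le: "f y \<le> b" if "y > 0" for y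
    using that by force
  define \<delta> where "\<delta> = h / \<eta> - b"
  define M where "M = \<bar>f 1\<bar> + \<bar>b\<bar>"
  define C where "C = \<bar>\<beta>\<bar> + \<alpha> / 4 * M\<^sup>2 + \<bar>a\<bar> * M + \<kappa>"
  define Y where "Y = 1 + C / (\<eta> * \<delta>)"
  have \<delta>: "\<eta> * \<delta> > 0"
    using b \<eta>_pos by (simp add: \<delta>_def)
  have "C \<ge> 0"
    using \<alpha>_pos \<kappa>_pos by (simp add: C_def M_def)
  then have Y: "Y \<ge> 1" "\<eta> * \<delta> * (Y - 1) = C"
    using \<delta> \<eta>_pos by (auto simp: Y_def)
  have slope: "f' t \<le> - 1" if "t \<ge> Y" for t
  proof -
    have "f 1 \<le> f t" "f t \<le> b"
      using mono_onD[OF mono, of 1 t] f_le[of t] that Y(1) by auto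
    then have "\<bar>f t\<bar> \<le> M"
      unfolding M_def by arith
    moreover have "\<eta> * \<delta> * t \<ge> \<eta> * \<delta> * (Y - 1)"
      using \<delta> that by (intro mult_left_mono) auto
    ultimately have "\<kappa> * f' t \<le> \<kappa> * (- 1)"
      using F_le_if_below[of "f t" M \<delta> t \<beta>] is_riccati_sol_eq[OF sol, of t] \<open>f t \<le> b\<close> that Y
      by (simp add: C_def \<delta>_def)
    then show ?thesis
      by (metis mult_le_cancel_left_pos \<kappa>_pos)
  qed
  have "f (Y + 1) \<le> f Y + (- 1) * ((Y + 1) - Y)"
    using Y(1) slope is_riccati_sol_at[OF sol]
    by (intro DERIV_le_imp_linear_upper_bound[where f' = f']) auto
  moreover have "f Y \<le> f (Y + 1)"
    using mono_onD[OF mono, of Y "Y + 1"] Y(1) by simp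
  ultimately show False
    by simp
qed

lemma mono_riccati_sol_tendsto:
  assumes sol: "is_riccati_sol \<beta> f f'" and mono: "mono_on {0<..} f"
  shows "(f \<longlongrightarrow> h / \<eta>) at_top"
proof (rule order_tendstoI)
  fix b
  assume "b < h / \<eta>"
  then obtain y0 where "y0 > 0" "f y0 > b"
    using mono_riccati_sol_exceeds[OF sol mono] by blast
  then have "f y > b" if "y \<ge> y0" for y
    using mono_onD[OF mono, of y0 y] that by simp
  then show "eventually (\<lambda>y. b < f y) at_top"
    using eventually_ge_at_top[of y0] by (rule eventually_mono[rotated])
next
  fix b
  assume "b > h / \<eta>"
  then have "f y < b" if "y \<ge> 1" for y
    using mono_riccati_sol_le[OF sol mono, of y] that by simp
  then show "eventually (\<lambda>y. f y < b) at_top"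
    using eventually_ge_at_top[of 1] by (rule eventually_mono[rotated])
qed

lemma riccati_sol_diff_eq:
  assumes "is_riccati_sol \<beta>1 f1 f1'" "is_riccati_sol \<beta>2 f2 f2'" "t \<ge> 0"
  shows "\<kappa> * (f2' t - f1' t) = \<beta>2 - \<beta>1 + (\<alpha> / 4 * (f1 t + f2 t) + \<eta> * t - a) * (f2 t - f1 t)"
proof -
  have "\<kappa> * (f2' t - f1' t) = F \<beta>2 t (f2 t) - F \<beta>1 t (f1 t)"
    using is_riccati_sol_eq[OF assms(1,3)] is_riccati_sol_eq[OF assms(2,3)]
    by (simp add: right_diff_distrib)
  also have "\<dots> = \<beta>2 - \<beta>1 + (\<alpha> / 4 * (f1 t + f2 t) + \<eta> * t - a) * (f2 t - f1 t)"
    using \<eta>_pos by (simp add: F_def field_simps power2_eq_square)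
  finally show ?thesis .
qed

lemma riccati_sol_less:
  assumes sol1: "is_riccati_sol \<beta>1 f1 f1'" and sol2: "is_riccati_sol \<beta>2 f2 f2'"
    and "f1 0 = f2 0" "\<beta>1 < \<beta>2" "y > 0"
  shows "f1 y < f2 y"
proof -
  define d where "d t = f2 t - f1 t" for t
  define d' where "d' t = f2' t - f1' t" for t
  have d_deriv: "(d has_real_derivative d' t) (at t)" if "t > 0" for t
    unfolding d_def[abs_def] d'_def
    by (rule DERIV_diff[OF is_riccati_sol_at[OF sol2 that] is_riccati_sol_at[OF sol1 that]])
  have slope_at_zeros: "d' t = (\<beta>2 - \<beta>1) / \<kappa>" if "t \<ge> 0" "d t = 0" for t
    using riccati_sol_diff_eq[OF sol1 sol2 that(1)] that(2) \<kappa>_pos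
    by (simp add: d_def d'_def field_simps)
  have "(d has_real_derivative d' 0) (at 0 within {0..})"
    unfolding d_def[abs_def] d'_def using sol1 sol2
    by (intro DERIV_diff) (simp_all add: is_riccati_sol_def)
  moreover have "d' 0 > 0"
    using slope_at_zeros[of 0] assms(3,4) \<kappa>_pos by (simp add: d_def)
  ultimately obtain e where e: "e > 0" "\<And>x. x > 0 \<Longrightarrow> x < e \<Longrightarrow> d 0 < d x"
    using has_real_derivative_pos_inc_right by fastforce
  define s where "s = min (e / 2) (y / 2)"
  have s: "0 < s" "s < y" "d s > 0"
    using e assms(3,5) by (auto simp: s_def d_def)
  have "d y > 0"
  proof (rule pos_if_rising_at_zeros[of s y d])
    show "s \<le> y" "d s > 0"
      using s by auto
    show "continuous_on {s..y} d"
    proof (intro continuous_at_imp_continuous_on ballI)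
      fix x
      assume "x \<in> {s..y}"
      then show "isCont d x"
        using s(1) d_deriv[of x] by (auto intro: DERIV_isCont)
    qed
    fix z
    assume "s < z" "z \<le> y" "d z = 0"
    then have "(d has_real_derivative (\<beta>2 - \<beta>1) / \<kappa>) (at z within {s..y})"
      using d_deriv[of z] slope_at_zeros[of z] s(1) by (auto intro: has_field_derivative_at_within)
    moreover have "(\<beta>2 - \<beta>1) / \<kappa> > 0"
      using assms(4) \<kappa>_pos by simp
    ultimately show "\<exists>d'>0. (d has_real_derivative d') (at z within {s..y})"
      by blast
  qed
  then show ?thesis
    by (simp add: d_def)
qed

lemma converging_riccati_sols_param_le:
  assumes sol1: "is_riccati_sol \<beta>1 f1 f1'" and sol2: "is_riccati_sol \<beta>2 f2 f2'"
    and "f1 0 = f2 0" and lim1: "(f1 \<longlongrightarrow> h / \<eta>) at_top" and lim2: "(f2 \<longlongrightarrow> h / \<eta>) at_top"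
  shows "\<beta>2 \<le> \<beta>1"
proof (rule ccontr)
  assume "\<not> \<beta>2 \<le> \<beta>1"
  then have less: "\<beta>1 < \<beta>2"
    by simp
  have "((\<lambda>t. f1 t + f2 t) \<longlongrightarrow> h / \<eta> + h / \<eta>) at_top"
    using lim1 lim2 by (rule tendsto_add)
  moreover have "h / \<eta> + h / \<eta> > 0"
    using h_pos \<eta>_pos by simp
  ultimately have "eventually (\<lambda>t. f1 t + f2 t > 0) at_top"
    by (rule order_tendstoD)
  moreover have "eventually (\<lambda>t. t \<ge> max 1 (a / \<eta>)) at_top"
    by (rule eventually_ge_at_top)
  ultimately have "eventually (\<lambda>t. ((\<lambda>t. f2 t - f1 t) has_real_derivative f2' t - f1' t) (at t)
      \<and> f2' t - f1' t \<ge> (\<beta>2 - \<beta>1) / \<kappa>) at_top"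
  proof eventually_elim
    case (elim t)
    then have "t > 0" "\<eta> * t - a \<ge> 0"
      using \<eta>_pos by (auto simp: pos_divide_le_eq mult.commute)
    moreover have "\<alpha> / 4 * (f1 t + f2 t) \<ge> 0"
      using elim(1) \<alpha>_pos by simp
    ultimately have "(\<alpha> / 4 * (f1 t + f2 t) + \<eta> * t - a) * (f2 t - f1 t) \<ge> 0"
      using riccati_sol_less[OF sol1 sol2 assms(3) less, of t] by (intro mult_nonneg_nonneg) auto
    then have "\<kappa> * (f2' t - f1' t) \<ge> \<beta>2 - \<beta>1"
      using riccati_sol_diff_eq[OF sol1 sol2, of t] \<open>t > 0\<close> by simp
    then show ?case
      using \<open>t > 0\<close> \<kappa>_pos
      by (auto simp: field_simps
          intro: DERIV_diff is_riccati_sol_at[OF sol1] is_riccati_sol_at[OF sol2])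
  qed
  moreover have "((\<lambda>t. f2 t - f1 t) \<longlongrightarrow> h / \<eta> - h / \<eta>) at_top"
    using lim2 lim1 by (rule tendsto_diff)
  ultimately show False
    using not_tendsto_if_DERIV_ge_pos[of "(\<beta>2 - \<beta>1) / \<kappa>"] less \<kappa>_pos by auto
qed

section \<open>Linearization of the Riccati equation\<close>

definition shift :: real where
  "shift = - \<alpha> * h / (4 * \<kappa> * \<eta>)"

definition P0 :: real where
  "P0 = - a / \<kappa> - 2 * shift"

definition P1 :: real where
  "P1 = \<eta> / \<kappa>"

definition C1 :: real where
  "C1 = \<alpha> * (r + h / \<eta>) / (4 * \<kappa>)"

definition Q :: "real \<Rightarrow> real" where
  "Q \<beta> = - \<alpha> * \<beta> / (4 * \<kappa>\<^sup>2) - shift\<^sup>2 - a * shift / \<kappa>"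

abbreviation coeffs :: "real \<Rightarrow> nat \<Rightarrow> real" where
  "coeffs \<beta> \<equiv> lin_ode_coeff P0 P1 C1 (Q \<beta>)"

definition w :: "real \<Rightarrow> real \<Rightarrow> real" where
  "w \<beta> = pseries (coeffs \<beta>)"

definition dw :: "real \<Rightarrow> real \<Rightarrow> real" where
  "dw \<beta> = pseries (diffs (coeffs \<beta>))"

text \<open>Since \<^term>\<open>w \<beta>\<close> solves \<open>w'' = (P0 + P1 y) w' + Q \<beta> w\<close>, the function
  \<^term>\<open>v \<beta>\<close> solves the Riccati equation wherever \<^term>\<open>w \<beta>\<close> does not vanish (elsewhere
  the quotient is junk).  The constant \<^term>\<open>shift\<close> cancels the term \<open>- h y\<close> of the equation,
  and \<^term>\<open>C1\<close> makes \<open>v \<beta> 0 = - r\<close>.\<close>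

definition v :: "real \<Rightarrow> real \<Rightarrow> real" where
  "v \<beta> y = - (4 * \<kappa> / \<alpha>) * (shift + dw \<beta> y / w \<beta> y)"

definition Fv :: "real \<Rightarrow> real \<Rightarrow> real" where
  "Fv \<beta> y = F \<beta> y (v \<beta> y)"

lemma w_has_derivative: "(w \<beta> has_real_derivative dw \<beta> y) (at y)"
  unfolding w_def dw_def
  by (intro pseries_has_real_derivative locally_uniformly_entire_summable lin_ode_coeff_entire)

lemma dw_has_derivative:
  "(dw \<beta> has_real_derivative (P0 + P1 * y) * dw \<beta> y + Q \<beta> * w \<beta> y) (at y)"
  unfolding dw_def w_def lin_ode_coeff_pseries[symmetric]
  by (intro pseries_has_real_derivative locally_uniformly_entire_summable
      locally_uniformly_entire_diffs lin_ode_coeff_entire)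

lemma w_0: "w \<beta> 0 = 1"
  by (simp add: w_def pseries_def)

lemma v_0: "v \<beta> 0 = - r"
proof -
  have "dw \<beta> 0 = C1"
    by (simp add: dw_def pseries_def diffs_def)
  then show ?thesis
    using \<kappa>_pos \<eta>_pos \<alpha>_pos by (simp add: v_def w_0 shift_def C1_def field_simps)
qed

lemma Fv_0: "Fv \<beta> 0 = \<beta> - beta2_low \<alpha> r a"
  by (simp add: Fv_def F_def v_0 beta2_low_def power2_eq_square)

lemma v_0_less: "v \<beta> 0 < h / \<eta>"
proof -
  have "h / \<eta> > 0"
    using h_pos \<eta>_pos by simp
  then show ?thesis
    using r_nonneg by (simp add: v_0)
qed

lemma dw_eq:
  assumes "w \<beta> y \<noteq> 0"
  shows "dw \<beta> y = - (\<alpha> / (4 * \<kappa>)) * (v \<beta> y - h / \<eta>) * w \<beta> y"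
  using assms \<kappa>_pos \<eta>_pos \<alpha>_pos by (simp add: v_def shift_def field_simps)

lemma v_has_derivative:
  assumes "w \<beta> y \<noteq> 0"
  shows "(v \<beta> has_real_derivative Fv \<beta> y / \<kappa>) (at y)"
proof -
  have "(v \<beta> has_real_derivative - (4 * \<kappa> / \<alpha>) * (((P0 + P1 * y) * dw \<beta> y + Q \<beta> * w \<beta> y)
      * w \<beta> y - dw \<beta> y * dw \<beta> y) / (w \<beta> y * w \<beta> y)) (at y)"
    unfolding v_def[abs_def]
    by (rule derivative_eq_intros w_has_derivative dw_has_derivative assms refl)+
      (use assms \<alpha>_pos in \<open>simp add: field_simps\<close>)
  moreover have "- (4 * \<kappa> / \<alpha>) * (((P0 + P1 * y) * dw \<beta> y + Q \<beta> * w \<beta> y)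
      * w \<beta> y - dw \<beta> y * dw \<beta> y) / (w \<beta> y * w \<beta> y) = Fv \<beta> y / \<kappa>"
    using assms \<kappa>_pos \<eta>_pos \<alpha>_pos
    by (simp add: Fv_def F_def v_def Q_def P0_def P1_def shift_def field_simps power2_eq_square)
  ultimately show ?thesis by simp
qed

lemma Fv_has_derivative_at_zero:
  assumes "w \<beta> y \<noteq> 0" "Fv \<beta> y = 0"
  shows "(Fv \<beta> has_real_derivative \<eta> * v \<beta> y - h) (at y)"
proof -
  have "(v \<beta> has_real_derivative 0) (at y)"
    using v_has_derivative[OF assms(1)] assms(2) by simp
  then have "(Fv \<beta> has_real_derivative \<alpha> / 4 * (2 * v \<beta> y * 0) + (\<eta> * (v \<beta> y - h / \<eta>) + \<eta> * y * 0)
      - a * 0) (at y)"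
    unfolding Fv_def[abs_def] F_def by (auto intro!: derivative_eq_intros simp: power2_eq_square)
  then show ?thesis
    using \<eta>_pos by (simp add: right_diff_distrib)
qed

lemma w_isCont: "isCont (w \<beta>) y"
  using w_has_derivative by (rule DERIV_isCont)

lemma v_isCont: "w \<beta> y \<noteq> 0 \<Longrightarrow> isCont (v \<beta>) y"
  using v_has_derivative by (rule DERIV_isCont)

lemma Fv_isCont: "w \<beta> y \<noteq> 0 \<Longrightarrow> isCont (Fv \<beta>) y"
  unfolding Fv_def[abs_def] F_def by (intro continuous_intros v_isCont)

definition w_pos_upto :: "real \<Rightarrow> real \<Rightarrow> bool" where
  "w_pos_upto \<beta> y \<longleftrightarrow> (\<forall>t. 0 \<le> t \<and> t \<le> y \<longrightarrow> w \<beta> t > 0)"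

lemma w_pos_uptoD: "w_pos_upto \<beta> y \<Longrightarrow> 0 \<le> t \<Longrightarrow> t \<le> y \<Longrightarrow> w \<beta> t \<noteq> 0"
  unfolding w_pos_upto_def by force

lemma w_pos_upto_mono: "w_pos_upto \<beta> y \<Longrightarrow> t \<le> y \<Longrightarrow> w_pos_upto \<beta> t"
  unfolding w_pos_upto_def by auto

lemma v_continuous_on:
  assumes "w_pos_upto \<beta> y" "0 \<le> s" "t \<le> y"
  shows "continuous_on {s..t} (v \<beta>)"
proof (intro continuous_at_imp_continuous_on ballI v_isCont)
  fix x
  assume "x \<in> {s..t}"
  then show "w \<beta> x \<noteq> 0"
    using w_pos_uptoD[OF assms(1)] assms(2,3) by simp
qed

lemma Fv_continuous_on:
  assumes "w_pos_upto \<beta> y" "0 \<le> s" "t \<le> y"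
  shows "continuous_on {s..t} (Fv \<beta>)"
proof (intro continuous_at_imp_continuous_on ballI Fv_isCont)
  fix x
  assume "x \<in> {s..t}"
  then show "w \<beta> x \<noteq> 0"
    using w_pos_uptoD[OF assms(1)] assms(2,3) by simp
qed

lemma v_mono_between:
  assumes "w_pos_upto \<beta> y" "0 \<le> s" "s \<le> t" "t \<le> y" "\<And>x. s < x \<Longrightarrow> x < t \<Longrightarrow> Fv \<beta> x \<ge> 0"
  shows "v \<beta> s \<le> v \<beta> t"
proof (rule DERIV_nonneg_imp_increasing_open[OF assms(3) _ v_continuous_on[OF assms(1,2,4)]])
  fix x
  assume x: "s < x" "x < t"
  then have "w \<beta> x \<noteq> 0"
    using w_pos_uptoD[OF assms(1)] assms(2,4) by simp
  then show "\<exists>d. (v \<beta> has_real_derivative d) (at x) \<and> 0 \<le> d"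
    using v_has_derivative assms(5)[OF x] \<kappa>_pos by (intro exI[of _ "Fv \<beta> x / \<kappa>"]) simp
qed

lemma v_antimono_between:
  assumes "w_pos_upto \<beta> y" "0 \<le> s" "s \<le> t" "t \<le> y" "\<And>x. s < x \<Longrightarrow> x < t \<Longrightarrow> Fv \<beta> x \<le> 0"
  shows "v \<beta> t \<le> v \<beta> s"
proof (rule DERIV_nonpos_imp_decreasing_open[OF assms(3) _ v_continuous_on[OF assms(1,2,4)]])
  fix x
  assume x: "s < x" "x < t"
  then have "w \<beta> x \<noteq> 0"
    using w_pos_uptoD[OF assms(1)] assms(2,4) by simp
  then show "\<exists>d. (v \<beta> has_real_derivative d) (at x) \<and> d \<le> 0"
    using v_has_derivative assms(5)[OF x] \<kappa>_pos
    by (intro exI[of _ "Fv \<beta> x / \<kappa>"]) (simp add: divide_nonpos_pos)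
qed

section \<open>Shooting\<close>

definition Overshoot :: "real set" where
  "Overshoot = {\<beta>. \<exists>y\<ge>0. w_pos_upto \<beta> y \<and> v \<beta> y > h / \<eta> \<and> Fv \<beta> y > 0}"

definition Undershoot :: "real set" where
  "Undershoot = {\<beta>. \<exists>y\<ge>0. w_pos_upto \<beta> y \<and> v \<beta> y < h / \<eta> \<and> Fv \<beta> y < 0}"

text \<open>At a zero of \<^term>\<open>Fv \<beta>\<close> its derivative is \<open>\<eta> v - h\<close>, so \<^term>\<open>Fv \<beta>\<close> cannot
  turn negative while \<^term>\<open>v \<beta>\<close> stays above \<open>h / \<eta>\<close>, nor positive while it stays below.\<close>

lemma overshoot_persists:
  assumes "0 \<le> y0" "y0 \<le> y" "w_pos_upto \<beta> y" "v \<beta> y0 > h / \<eta>" "Fv \<beta> y0 > 0"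
  shows "v \<beta> y > h / \<eta> \<and> Fv \<beta> y > 0"
proof -
  have Fv_pos: "Fv \<beta> t > 0" if "y0 \<le> t" "t \<le> y" for t
  proof (rule pos_if_rising_at_zeros[OF that(1) Fv_continuous_on[OF assms(3) assms(1) that(2)]
        assms(5)])
    fix z
    assume z: "y0 < z" "z \<le> t" "Fv \<beta> z = 0" "\<And>s. y0 \<le> s \<Longrightarrow> s < z \<Longrightarrow> Fv \<beta> s > 0"
    have "v \<beta> y0 \<le> v \<beta> z"
    proof (rule v_mono_between[OF assms(3,1)])
      show "y0 \<le> z" "z \<le> y"
        using z \<open>t \<le> y\<close> by auto
      show "Fv \<beta> x \<ge> 0" if "y0 < x" "x < z" for x
        using z(4)[of x] that by simp
    qed
    then have "h / \<eta> < v \<beta> z"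
      using assms(4) by linarith
    then have "\<eta> * v \<beta> z - h > 0"
      using \<eta>_pos by (simp add: field_simps)
    moreover have "w \<beta> z \<noteq> 0"
      using w_pos_uptoD[OF assms(3)] z that assms(1) by simp
    then have "(Fv \<beta> has_real_derivative \<eta> * v \<beta> z - h) (at z)"
      using Fv_has_derivative_at_zero z(3) by simp
    then have "(Fv \<beta> has_real_derivative \<eta> * v \<beta> z - h) (at z within {y0..t})"
      by (rule has_field_derivative_at_within)
    ultimately show "\<exists>d>0. (Fv \<beta> has_real_derivative d) (at z within {y0..t})"
      by (intro exI conjI)
  qed
  have "v \<beta> y0 \<le> v \<beta> y"
    using Fv_pos assms(1,2) by (intro v_mono_between[OF assms(3)]) (auto intro: less_imp_le)
  then show ?thesis
    using Fv_pos[of y] assms(2,4) by simp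
qed

lemma undershoot_persists:
  assumes "0 \<le> y0" "y0 \<le> y" "w_pos_upto \<beta> y" "v \<beta> y0 < h / \<eta>" "Fv \<beta> y0 < 0"
  shows "v \<beta> y < h / \<eta> \<and> Fv \<beta> y < 0"
proof -
  have Fv_neg: "- Fv \<beta> t > 0" if "y0 \<le> t" "t \<le> y" for t
  proof (rule pos_if_rising_at_zeros[of y0 t "\<lambda>s. - Fv \<beta> s"])
    fix z
    assume z: "y0 < z" "z \<le> t" "- Fv \<beta> z = 0" "\<And>s. y0 \<le> s \<Longrightarrow> s < z \<Longrightarrow> - Fv \<beta> s > 0"
    have "v \<beta> z \<le> v \<beta> y0"
    proof (rule v_antimono_between[OF assms(3,1)])
      show "y0 \<le> z" "z \<le> y"
        using z \<open>t \<le> y\<close> by auto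
      show "Fv \<beta> x \<le> 0" if "y0 < x" "x < z" for x
        using z(4)[of x] that by simp
    qed
    then have "v \<beta> z < h / \<eta>"
      using assms(4) by linarith
    then have "- (\<eta> * v \<beta> z - h) > 0"
      using \<eta>_pos by (simp add: field_simps)
    moreover have "w \<beta> z \<noteq> 0"
      using w_pos_uptoD[OF assms(3)] z that assms(1) by simp
    ultimately have "((\<lambda>s. - Fv \<beta> s) has_real_derivative - (\<eta> * v \<beta> z - h)) (at z)"
      using Fv_has_derivative_at_zero z(3) by (intro DERIV_minus) simp
    then have "((\<lambda>s. - Fv \<beta> s) has_real_derivative - (\<eta> * v \<beta> z - h)) (at z within {y0..t})"
      by (rule has_field_derivative_at_within)
    with \<open>- (\<eta> * v \<beta> z - h) > 0\<close>
    show "\<exists>d>0. ((\<lambda>s. - Fv \<beta> s) has_real_derivative d) (at z within {y0..t})"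
      by (intro exI conjI)
  next
    show "continuous_on {y0..t} (\<lambda>s. - Fv \<beta> s)"
      using Fv_continuous_on[OF assms(3) assms(1) that(2)] by (rule continuous_on_minus)
  qed (use assms that in auto)
  have "v \<beta> y \<le> v \<beta> y0"
    using Fv_neg assms(1,2) by (intro v_antimono_between[OF assms(3)]) (auto intro: less_imp_le)
  then show ?thesis
    using Fv_neg[of y] assms(2,4) by simp
qed

lemma Overshoot_Undershoot_disjoint: "Overshoot \<inter> Undershoot = {}"
proof (rule equals0I)
  fix \<beta>
  assume "\<beta> \<in> Overshoot \<inter> Undershoot"
  then obtain y0 y1 where o: "y0 \<ge> 0" "w_pos_upto \<beta> y0" "v \<beta> y0 > h / \<eta>" "Fv \<beta> y0 > 0"
    and u: "y1 \<ge> 0" "w_pos_upto \<beta> y1" "v \<beta> y1 < h / \<eta>" "Fv \<beta> y1 < 0"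
    unfolding Overshoot_def Undershoot_def by auto
  show False
  proof (cases "y0 \<le> y1")
    case True
    with overshoot_persists[OF o(1) True u(2) o(3,4)] u(3) show False
      by simp
  next
    case False
    then have "y1 \<le> y0"
      by simp
    with undershoot_persists[OF u(1) this o(2) u(3,4)] o(3) show False
      by simp
  qed
qed

lemma Undershoot_nonempty: "beta2_low \<alpha> r a - 1 \<in> Undershoot"
proof -
  have "w_pos_upto \<beta> 0" for \<beta>
    unfolding w_pos_upto_def
  proof (intro allI impI)
    fix t :: real
    assume "0 \<le> t \<and> t \<le> 0"
    then have "t = 0"
      by simp
    then show "w \<beta> t > 0"
      by (simp add: w_0)
  qed
  moreover note v_0_less
  moreover have "Fv (beta2_low \<alpha> r a - 1) 0 < 0"
    by (simp add: Fv_0)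
  ultimately show ?thesis
    unfolding Undershoot_def by blast
qed

lemma not_Overshoot_v_le:
  assumes "\<beta> \<notin> Overshoot" "w_pos_upto \<beta> y" "0 \<le> y"
  shows "v \<beta> y \<le> h / \<eta>"
proof (rule ccontr)
  assume "\<not> v \<beta> y \<le> h / \<eta>"
  then have above: "v \<beta> y - h / \<eta> > 0"
    by simp
  have cont: "continuous_on {0..y} (\<lambda>t. v \<beta> t - h / \<eta>)"
    using v_continuous_on[OF assms(2) order_refl order_refl] by (intro continuous_intros)
  have below: "v \<beta> 0 - h / \<eta> \<le> 0"
    using v_0_less[of \<beta>] by simp
  obtain s where s: "0 \<le> s" "s < y" "v \<beta> s - h / \<eta> = 0"
    "\<And>t. s < t \<Longrightarrow> t \<le> y \<Longrightarrow> v \<beta> t - h / \<eta> > 0"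
    using last_zero_crossing[OF assms(3) cont below above] by blast
  have "v \<beta> y \<le> v \<beta> s"
  proof (rule v_antimono_between[OF assms(2) s(1) less_imp_le[OF s(2)] order_refl])
    fix t
    assume t: "s < t" "t < y"
    show "Fv \<beta> t \<le> 0"
    proof (rule ccontr)
      assume "\<not> Fv \<beta> t \<le> 0"
      moreover have "v \<beta> t > h / \<eta>" "w_pos_upto \<beta> t" "t \<ge> 0"
        using s(1) s(4)[of t] t w_pos_upto_mono[OF assms(2)] by auto
      ultimately have "\<beta> \<in> Overshoot"
        unfolding Overshoot_def by auto
      with assms(1) show False ..
    qed
  qed
  then show False
    using s(3) above by simp
qed

lemma not_Overshoot_w_pos:
  assumes "\<beta> \<notin> Overshoot" "0 \<le> y"
  shows "w \<beta> y > 0"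
proof (rule ccontr)
  assume "\<not> w \<beta> y > 0"
  then have "w \<beta> y \<le> 0"
    by simp
  moreover have "continuous_on {0..y} (w \<beta>)" "w \<beta> 0 > 0"
    by (auto simp: w_0 intro!: continuous_at_imp_continuous_on w_isCont)
  ultimately obtain z where z: "0 < z" "z \<le> y" "w \<beta> z = 0"
    "\<And>t. 0 \<le> t \<Longrightarrow> t < z \<Longrightarrow> w \<beta> t > 0"
    using first_zero_crossing[OF assms(2)] by blast
  have "w \<beta> 0 \<le> w \<beta> z"
  proof (rule DERIV_nonneg_imp_increasing_open[OF less_imp_le[OF z(1)]])
    show "continuous_on {0..z} (w \<beta>)"
      by (intro continuous_at_imp_continuous_on ballI w_isCont)
    fix x
    assume x: "0 < x" "x < z"
    then have pos: "w_pos_upto \<beta> x" "w \<beta> x > 0"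
      using z(4) by (auto simp: w_pos_upto_def)
    then have "v \<beta> x - h / \<eta> \<le> 0"
      using not_Overshoot_v_le[OF assms(1)] x by simp
    then have "\<alpha> * (v \<beta> x - h / \<eta>) * w \<beta> x / (4 * \<kappa>) \<le> 0"
      using pos(2) \<alpha>_pos \<kappa>_pos
      by (intro divide_nonpos_pos mult_nonpos_nonneg mult_nonneg_nonpos) auto
    then have "dw \<beta> x \<ge> 0"
      using dw_eq[of \<beta> x] pos(2) by simp
    then show "\<exists>d. (w \<beta> has_real_derivative d) (at x) \<and> 0 \<le> d"
      using w_has_derivative by blast
  qed
  then show False
    using z(3) by (simp add: w_0)
qed

lemma not_Overshoot_w_pos_upto: "\<beta> \<notin> Overshoot \<Longrightarrow> w_pos_upto \<beta> y"
  by (simp add: w_pos_upto_def not_Overshoot_w_pos)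

lemma Overshoot_nonempty: "\<kappa> * (r + h / \<eta> + 1) + 2 * (\<eta> + \<bar>a\<bar>)\<^sup>2 / \<alpha> + h \<in> Overshoot"
  (is "?\<beta> \<in> Overshoot")
proof (rule ccontr)
  assume not_over: "?\<beta> \<notin> Overshoot"
  have Fv_large: "Fv ?\<beta> t \<ge> \<kappa> * (r + h / \<eta> + 1)" if "0 \<le> t" "t \<le> 1" for t
    using F_ge_on_unit_interval[OF that, of ?\<beta> "v ?\<beta> t"] by (simp add: Fv_def)
  have "v ?\<beta> 0 + (r + h / \<eta> + 1) * (1 - 0) \<le> v ?\<beta> 1"
  proof (rule DERIV_ge_imp_linear_lower_bound)
    fix t :: real
    assume "0 \<le> t" "t \<le> 1"
    then show "(v ?\<beta> has_real_derivative Fv ?\<beta> t / \<kappa>) (at t)"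
      using v_has_derivative not_Overshoot_w_pos[OF not_over] by (simp add: less_imp_neq[symmetric])
    show "r + h / \<eta> + 1 \<le> Fv ?\<beta> t / \<kappa>"
      using Fv_large[OF \<open>0 \<le> t\<close> \<open>t \<le> 1\<close>] \<kappa>_pos by (simp add: field_simps)
  qed simp
  then have "v ?\<beta> 1 > h / \<eta>"
    by (simp add: v_0)
  moreover have "Fv ?\<beta> 1 > 0"
  proof -
    have "r + h / \<eta> + 1 > 0"
      using r_nonneg h_pos \<eta>_pos by (simp add: add_nonneg_pos)
    then have "\<kappa> * (r + h / \<eta> + 1) > 0"
      by (rule mult_pos_pos[OF \<kappa>_pos])
    then show ?thesis
      using Fv_large[of 1] by simp
  qed
  ultimately have "?\<beta> \<in> Overshoot"
    unfolding Overshoot_def using not_Overshoot_w_pos_upto[OF not_over, of 1]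
    by (intro CollectI exI[of _ 1]) simp
  with not_over show False ..
qed

lemma Q_continuous_prod: "continuous_on UNIV (\<lambda>z::real \<times> real. (Q (fst z), snd z))"
  unfolding Q_def using \<kappa>_pos by (intro continuous_intros) auto

lemma w_continuous_prod: "continuous_on UNIV (\<lambda>z. w (fst z) (snd z))"
  unfolding w_def
  using continuous_on_compose2[OF locally_uniformly_entire_continuous[OF lin_ode_coeff_entire
        lin_ode_coeff_continuous] Q_continuous_prod]
  by simp

lemma dw_continuous_prod: "continuous_on UNIV (\<lambda>z. dw (fst z) (snd z))"
proof -
  have "continuous_on UNIV (\<lambda>q. diffs (lin_ode_coeff P0 P1 C1 q) n)" for n
    unfolding diffs_def by (intro continuous_intros lin_ode_coeff_continuous)
  then show ?thesis
    unfolding dw_def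
    using continuous_on_compose2[OF locally_uniformly_entire_continuous[OF
          locally_uniformly_entire_diffs[OF lin_ode_coeff_entire]] Q_continuous_prod]
    by simp
qed

lemma v_isCont_param:
  assumes "w \<beta>0 y \<noteq> 0"
  shows "isCont (\<lambda>\<beta>. v \<beta> y) \<beta>0"
proof -
  have "isCont (\<lambda>\<beta>. w \<beta> y) \<beta>0" "isCont (\<lambda>\<beta>. dw \<beta> y) \<beta>0"
    by (rule isCont_of_continuous_on_prod[OF w_continuous_prod],
        rule isCont_of_continuous_on_prod[OF dw_continuous_prod])
  then have "isCont (\<lambda>\<beta>. shift + dw \<beta> y / w \<beta> y) \<beta>0"
    using assms by (intro isCont_add continuous_const isCont_divide)
  then show ?thesis
    unfolding v_def by (rule isCont_mult[OF continuous_const])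
qed

lemma Fv_isCont_param: "w \<beta>0 y \<noteq> 0 \<Longrightarrow> isCont (\<lambda>\<beta>. Fv \<beta> y) \<beta>0"
  unfolding Fv_def F_def by (intro continuous_intros v_isCont_param)

lemma eventually_w_pos_upto:
  assumes "w_pos_upto \<beta>0 y"
  shows "eventually (\<lambda>\<beta>. w_pos_upto \<beta> y) (nhds \<beta>0)"
proof -
  define W where "W = {z :: real \<times> real. w (fst z) (snd z) > 0}"
  have "open W"
    unfolding W_def by (rule open_Collect_less[OF continuous_on_const w_continuous_prod])
  moreover have "{\<beta>0} \<times> {0..y} \<subseteq> W"
  proof
    fix z
    assume "z \<in> {\<beta>0} \<times> {0..y}"
    then obtain t where "z = (\<beta>0, t)" "0 \<le> t" "t \<le> y"
      by auto
    then show "z \<in> W"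
      using assms by (simp add: W_def w_pos_upto_def)
  qed
  ultimately have "\<exists>X. \<beta>0 \<in> X \<and> open X \<and> X \<times> {0..y} \<subseteq> W"
    by (rule Elementary_Topology.tube_lemma[OF compact_Icc])
  then obtain X where X: "\<beta>0 \<in> X" "open X" "X \<times> {0..y} \<subseteq> W"
    by blast
  have "w_pos_upto \<beta> y" if "\<beta> \<in> X" for \<beta>
    unfolding w_pos_upto_def
  proof (intro allI impI)
    fix t
    assume "0 \<le> t \<and> t \<le> y"
    then have "(\<beta>, t) \<in> X \<times> {0..y}"
      using that by simp
    then have "(\<beta>, t) \<in> W"
      using X(3) by (rule subsetD[rotated])
    then show "w \<beta> t > 0"
      by (simp add: W_def)
  qed
  with eventually_nhds_in_open[OF X(2,1)] show ?thesis
    by (rule eventually_mono)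
qed

lemma open_shooting_set:
  assumes "open A" "open B"
  shows "open {\<beta>. \<exists>y\<ge>0. w_pos_upto \<beta> y \<and> v \<beta> y \<in> A \<and> Fv \<beta> y \<in> B}" (is "open ?S")
  unfolding open_subopen[of ?S]
proof
  fix \<beta>0
  assume "\<beta>0 \<in> ?S"
  then obtain y where y: "y \<ge> 0" "w_pos_upto \<beta>0 y" "v \<beta>0 y \<in> A" "Fv \<beta>0 y \<in> B"
    by blast
  then have "w \<beta>0 y \<noteq> 0"
    using w_pos_uptoD by blast
  then have "((\<lambda>\<beta>. v \<beta> y) \<longlongrightarrow> v \<beta>0 y) (nhds \<beta>0)" "((\<lambda>\<beta>. Fv \<beta> y) \<longlongrightarrow> Fv \<beta>0 y) (nhds \<beta>0)"
    using v_isCont_param[of \<beta>0 y] Fv_isCont_param[of \<beta>0 y]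
      tendsto_at_iff_tendsto_nhds[of "\<lambda>\<beta>. v \<beta> y" \<beta>0]
      tendsto_at_iff_tendsto_nhds[of "\<lambda>\<beta>. Fv \<beta> y" \<beta>0]
    by (simp_all add: continuous_at)
  then have "eventually (\<lambda>\<beta>. w_pos_upto \<beta> y \<and> v \<beta> y \<in> A \<and> Fv \<beta> y \<in> B) (nhds \<beta>0)"
    using eventually_w_pos_upto[OF y(2)] topological_tendstoD assms y(3,4)
    by (intro eventually_conj) auto
  then obtain T where "open T" "\<beta>0 \<in> T" "\<And>\<beta>. \<beta> \<in> T \<Longrightarrow> w_pos_upto \<beta> y \<and> v \<beta> y \<in> A \<and> Fv \<beta> y \<in> B"
    unfolding eventually_nhds by blast
  then show "\<exists>T. open T \<and> \<beta>0 \<in> T \<and> T \<subseteq> ?S"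
    using y(1) by blast
qed

lemma open_Overshoot: "open Overshoot"
  using open_shooting_set[of "{h / \<eta><..}" "{0<..}"] by (simp add: Overshoot_def)

lemma open_Undershoot: "open Undershoot"
  using open_shooting_set[of "{..<h / \<eta>}" "{..<0}"] by (simp add: Undershoot_def)

lemma shooting_parameter_exists: "\<exists>\<beta>. \<beta> \<notin> Overshoot \<and> \<beta> \<notin> Undershoot"
proof (rule ccontr)
  assume "\<not> ?thesis"
  then have "UNIV \<subseteq> Overshoot \<union> Undershoot"
    by blast
  then have "Overshoot = {} \<or> Undershoot = {}"
    using connectedD[OF connected_UNIV open_Overshoot open_Undershoot] Overshoot_Undershoot_disjoint
    by simp
  then show False
    using Overshoot_nonempty Undershoot_nonempty by blast
qed

context
  fixes \<beta> :: real
  assumes not_over: "\<beta> \<notin> Overshoot" and not_under: "\<beta> \<notin> Undershoot"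
begin

lemma shooting_Fv_nonneg:
  assumes "y \<ge> 0"
  shows "Fv \<beta> y \<ge> 0"
proof (cases "v \<beta> y < h / \<eta>")
  case True
  show ?thesis
  proof (rule ccontr)
    assume "\<not> Fv \<beta> y \<ge> 0"
    then have "\<beta> \<in> Undershoot"
      unfolding Undershoot_def using assms True not_Overshoot_w_pos_upto[OF not_over, of y]
      by (intro CollectI exI[of _ y]) simp
    with not_under show False ..
  qed
next
  case False
  have le: "v \<beta> t \<le> h / \<eta>" if "t \<ge> 0" for t
    using not_Overshoot_v_le[OF not_over not_Overshoot_w_pos_upto[OF not_over] that] .
  with False assms have max: "v \<beta> y = h / \<eta>"
    by fastforce
  then have "y \<noteq> 0"
    using v_0_less[of \<beta>] by auto
  with assms have "y > 0"
    by simp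
  have "\<forall>t. \<bar>y - t\<bar> < y \<longrightarrow> v \<beta> t \<le> v \<beta> y"
    using le max by auto
  moreover have "w \<beta> y \<noteq> 0"
    using not_Overshoot_w_pos[OF not_over assms] by simp
  ultimately have "Fv \<beta> y / \<kappa> = 0"
    using DERIV_local_max[OF v_has_derivative \<open>y > 0\<close>] by blast
  then show ?thesis
    using \<kappa>_pos by simp
qed

lemma shooting_v_mono: "mono_on {0..} (v \<beta>)"
proof (rule mono_onI)
  fix s t :: real
  assume "s \<in> {0..}" "t \<in> {0..}" "s \<le> t"
  then show "v \<beta> s \<le> v \<beta> t"
    using shooting_Fv_nonneg
    by (intro v_mono_between[OF not_Overshoot_w_pos_upto[OF not_over]]) auto
qed

lemma shooting_is_riccati_sol: "is_riccati_sol \<beta> (v \<beta>) (\<lambda>y. Fv \<beta> y / \<kappa>)"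
  unfolding is_riccati_sol_def
proof (intro allI impI conjI)
  fix y :: real
  assume "y \<ge> 0"
  then have "w \<beta> y > 0"
    by (rule not_Overshoot_w_pos[OF not_over])
  then show "(v \<beta> has_real_derivative Fv \<beta> y / \<kappa>) (at y within {0..})"
    by (intro has_field_derivative_at_within[OF v_has_derivative]) simp
  show "\<kappa> * (Fv \<beta> y / \<kappa>) = F \<beta> y (v \<beta> y)"
    using \<kappa>_pos by (simp add: Fv_def)
qed

lemma shooting_is_sol: "is_sol \<sigma> \<eta> \<alpha> h r a \<beta> (v \<beta>)"
proof -
  have "continuous_on {0..} (\<lambda>y. Fv \<beta> y / \<kappa>)"
  proof (intro continuous_at_imp_continuous_on ballI)
    fix y :: real
    assume "y \<in> {0..}"
    then have "w \<beta> y > 0"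
      by (intro not_Overshoot_w_pos[OF not_over]) simp
    then have "w \<beta> y \<noteq> 0"
      by simp
    then show "isCont (\<lambda>y. Fv \<beta> y / \<kappa>) y"
      using \<kappa>_pos by (intro isCont_divide Fv_isCont continuous_const) auto
  qed
  then show ?thesis
    unfolding is_sol_iff_riccati using shooting_is_riccati_sol v_0 by blast
qed

lemma shooting_v_tendsto: "(v \<beta> \<longlongrightarrow> h / \<eta>) at_top"
  using shooting_is_riccati_sol mono_on_subset[OF shooting_v_mono]
  by (rule mono_riccati_sol_tendsto) auto

lemma shooting_parameter_gt_beta2_low: "\<beta> > beta2_low \<alpha> r a"
proof -
  have "Fv \<beta> 0 \<noteq> 0"
  proof
    assume "Fv \<beta> 0 = 0"
    then have "(Fv \<beta> has_real_derivative \<eta> * v \<beta> 0 - h) (at 0)"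
      using Fv_has_derivative_at_zero not_Overshoot_w_pos[OF not_over, of 0] by simp
    moreover have "\<eta> * v \<beta> 0 - h < 0"
      using v_0_less[of \<beta>] \<eta>_pos by (simp add: field_simps)
    ultimately obtain e where e: "e > 0" "\<forall>x>0. x < e \<longrightarrow> Fv \<beta> 0 > Fv \<beta> (0 + x)"
      by (blast dest: DERIV_neg_dec_right)
    then have "Fv \<beta> (e / 2) < 0"
      using \<open>Fv \<beta> 0 = 0\<close> by simp
    then show False
      using shooting_Fv_nonneg[of "e / 2"] e(1) by simp
  qed
  then show ?thesis
    using shooting_Fv_nonneg[of 0] Fv_0[of \<beta>] by simp
qed

lemma shooting_parameter_nonneg: "\<beta> \<ge> 0"
proof -
  have "eventually (\<lambda>y. v \<beta> y > 0) at_top"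
    using order_tendstoD(1)[OF shooting_v_tendsto, of 0] h_pos \<eta>_pos by simp
  then obtain Y0 where "\<And>y. y \<ge> Y0 \<Longrightarrow> v \<beta> y > 0"
    unfolding eventually_at_top_linorder by blast
  then have Y: "v \<beta> (max Y0 0) > 0" "max Y0 0 \<ge> 0"
    by simp_all
  moreover have "v \<beta> 0 \<le> 0"
    using r_nonneg by (simp add: v_0)
  moreover have "continuous_on {0..max Y0 0} (v \<beta>)"
    using v_continuous_on[OF not_Overshoot_w_pos_upto[OF not_over] order_refl order_refl] .
  ultimately have "\<exists>y0\<ge>0. y0 \<le> max Y0 0 \<and> v \<beta> y0 = 0"
    by (intro IVT') (auto intro: less_imp_le)
  then obtain y0 where y0: "0 \<le> y0" "v \<beta> y0 = 0"
    by blast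
  then have "Fv \<beta> y0 = \<beta> - h * y0"
    using \<eta>_pos by (simp add: Fv_def F_def field_simps)
  moreover have "h * y0 \<ge> 0"
    using h_pos y0(1) by simp
  ultimately show ?thesis
    using shooting_Fv_nonneg[OF y0(1)] by linarith
qed

lemma mono_sol_param_eq_shooting:
  assumes "is_sol \<sigma> \<eta> \<alpha> h r a \<gamma> f" "mono_on {0<..} f"
  shows "\<gamma> = \<beta>"
proof -
  obtain f' where sol: "is_riccati_sol \<gamma> f f'" and "f 0 = - r"
    using assms(1) unfolding is_sol_iff_riccati by blast
  have "(f \<longlongrightarrow> h / \<eta>) at_top"
    using mono_riccati_sol_tendsto[OF sol assms(2)] .
  moreover have "f 0 = v \<beta> 0"
    using \<open>f 0 = - r\<close> by (simp add: v_0)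
  ultimately have "\<beta> \<le> \<gamma>" "\<gamma> \<le> \<beta>"
    using converging_riccati_sols_param_le[OF sol shooting_is_riccati_sol _ _ shooting_v_tendsto]
      converging_riccati_sols_param_le[OF shooting_is_riccati_sol sol _ shooting_v_tendsto]
    by simp_all
  then show ?thesis
    by simp
qed

end

end

theorem lemma24:
  fixes \<sigma> \<eta> \<alpha> h r a :: real
  assumes "\<sigma> > 0" "\<eta> > 0" "\<alpha> > 0" "h > 0" "r \<ge> 0"
  defines "I \<equiv> (if a > - \<alpha> / 4 * r then I1 \<sigma> \<eta> \<alpha> h r a else I2 \<sigma> \<eta> \<alpha> h r a)"
  shows "\<exists>w. is_sol \<sigma> \<eta> \<alpha> h r a (Inf I) w \<and> mono_on {0..} w \<and>
             (w \<longlongrightarrow> h / \<eta>) at_top"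
proof -
  interpret riccati \<sigma> \<eta> \<alpha> h r a
    using assms(1-5) by unfold_locales
  obtain \<beta> where \<beta>: "\<beta> \<notin> Overshoot" "\<beta> \<notin> Undershoot"
    using shooting_parameter_exists by blast
  have "I = {\<beta>}"
  proof
    show "I \<subseteq> {\<beta>}"
    proof
      fix \<gamma>
      assume "\<gamma> \<in> I"
      then obtain f where "is_sol \<sigma> \<eta> \<alpha> h r a \<gamma> f" "mono_on {0<..} f"
        unfolding I_def I1_def I2_def by (auto split: if_splits)
      then show "\<gamma> \<in> {\<beta>}"
        using mono_sol_param_eq_shooting[OF \<beta>] by simp
    qed
    have "mono_on {0<..} (v \<beta>)"
      by (rule mono_on_subset[OF shooting_v_mono[OF \<beta>]]) auto
    then show "{\<beta>} \<subseteq> I"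
      using shooting_is_sol[OF \<beta>] shooting_parameter_nonneg[OF \<beta>]
        shooting_parameter_gt_beta2_low[OF \<beta>]
      by (auto simp: I_def I1_def I2_def)
  qed
  then show ?thesis
    using shooting_is_sol[OF \<beta>] shooting_v_mono[OF \<beta>] shooting_v_tendsto[OF \<beta>] by auto
qed

end
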